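(* Under Total Store Order, for all integers $\mu\ge 1$ and $q\ge 0$, $$\Pr[F_\mu \mid \Phi_\mu \text{ exists and } \Psi_\mu=q]\;\ge\;\frac{2^{-(q-1)}-2^{-\mu q}}{\binom{\mu+q-1}{q}}.$$
   Context: Fix $m\ge 1$. A random program is a sequence $x_1,\dots,x_{m+2}$ of memory operations, each with a type in $\{\mathrm{LD},\mathrm{ST}\}$: $x_1,\dots,x_m$ have i.i.d. types, each $\mathrm{ST}$ with probability $1/2$ and $\mathrm{LD}$ with probability $1/2$; $x_{m+1}$ (the critical load) has type $\mathrm{LD}$ and $x_{m+2}$ (the critical store) has type $\mathrm{ST}$. The initial order is $S_0=(x_1,\dots,x_{m+2})$. A memory model is specified by the set of ordered type pairs $(\tau_1,\tau_2)$ for which an instruction of type $\tau_2$ may be moved ahead of an immediately preceding instruction of type $\tau_1$: Sequential Consistency (SC) allows no pair; Total Store Order (TSO) allows only the pair $(\mathrm{ST},\mathrm{LD})$ (a load may move ahead of a preceding store); Weak Ordering (WO) allows all four pairs. The settling process runs rounds $r=1,\dots,m+2$. Before round $r$, the current order $S_{r-1}$ consists of $x_1,\dots,x_{r-1}$ in some order in positions $1,\dots,r-1$, followed by $x_r,\dots,x_{m+2}$ in positions $r,\dots,m+2$. In round $r$, instruction $x_r$ (starting at position $r$) repeatedly attempts to swap with the instruction immediately preceding it in the current order: the attempt fails automatically if the pair (type of the preceding instruction, type of $x_r$) is not allowed by the memory model, or if $x_r$ is the critical store and the preceding instruction is the critical load; otherwise the attempt succeeds independently with probability $1/2$. The round ends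 when an attempt fails or $x_r$ reaches position $1$; the resulting order is $S_r$. For $\mu\ge1$, $\Phi_\mu$ is the largest index $i\le m$ such that $x_i$ has type $\mathrm{ST}$ and exactly $\mu$ of $x_i,\dots,x_m$ have type $\mathrm{ST}$ (i.e. the initial position of the $\mu$-th non-critical store counting upward from the critical load), if it exists; $\Psi_\mu=m+1-\mu-\Phi_\mu$ is the number of loads among $x_{\Phi_\mu+1},\dots,x_m$. $F_\mu$ is the event that in the order $S_m$ the instructions at positions $m-\mu+1,\dots,m$ all have type $\mathrm{ST}$. *)

theory Defs
  imports "HOL-Probability.Probability"
begin

datatype optype = LD | ST

text \<open>A memory model is the set of allowed ordered type pairs (tau1, tau2): an instruction
  of type tau2 may move ahead of an immediately preceding instruction of type tau1.\<close>
type_synonym memory_model = "optype \<Rightarrow> optype \<Rightarrow> bool"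

definition SC :: memory_model where "SC a b = False"
definition TSO :: memory_model where "TSO a b = (a = ST \<and> b = LD)"
definition WO :: memory_model where "WO a b = True"

text \<open>Type of instruction x_i: x_1..x_m have types ty i, x_(m+1) is the critical load,
  x_(m+2) the critical store.\<close>
definition itype :: "nat \<Rightarrow> (nat \<Rightarrow> optype) \<Rightarrow> nat \<Rightarrow> optype" where
  "itype m ty i = (if i \<le> m then ty i else if i = m + 1 then LD else ST)"

text \<open>Orders are lists of instruction indices; list index k is position k+1.
  bubble: the instruction at list index Suc p attempts to swap with the one at index p;
  the j-th actual (non-automatically-failing) attempt succeeds iff coin j.\<close>
fun bubble :: "memory_model \<Rightarrow> nat \<Rightarrow> (nat \<Rightarrow> optype) \<Rightarrow> (nat \<Rightarrow> bool) \<Rightarrow> nat \<Rightarrow> nat \<Rightarrow> nat list \<Rightarrow> nat list" where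
  "bubble M m ty coin 0 j S = S"
| "bubble M m ty coin (Suc p) j S =
     (let x = S ! Suc p; y = S ! p in
      if M (itype m ty y) (itype m ty x) \<and> \<not> (x = m + 2 \<and> y = m + 1) \<and> coin j
      then bubble M m ty coin p (Suc j) (S[p := x, Suc p := y])
      else S)"

text \<open>S_k: order after rounds 1..k; round r uses the coin sequence c r.\<close>
fun settle :: "memory_model \<Rightarrow> nat \<Rightarrow> (nat \<Rightarrow> optype) \<Rightarrow> (nat \<Rightarrow> nat \<Rightarrow> bool) \<Rightarrow> nat \<Rightarrow> nat list" where
  "settle M m ty c 0 = [1..<m + 3]"
| "settle M m ty c (Suc k) = bubble M m ty (c (Suc k)) k 0 (settle M m ty c k)"

text \<open>Sample space: types of x_1..x_m and the coins (round r in 1..m+2, attempt j < m+2;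
  at most r-1 attempts happen in round r). Uniform distribution = i.i.d. fair choices.\<close>
definition sample_space :: "nat \<Rightarrow> ((nat \<Rightarrow> optype) \<times> (nat \<Rightarrow> nat \<Rightarrow> bool)) set" where
  "sample_space m = {(ty, c). (\<forall>i. i \<notin> {1..m} \<longrightarrow> ty i = LD) \<and>
                          (\<forall>r j. (r \<notin> {1..m+2} \<or> m + 2 \<le> j) \<longrightarrow> \<not> c r j)}"

definition program_pmf :: "nat \<Rightarrow> ((nat \<Rightarrow> optype) \<times> (nat \<Rightarrow> nat \<Rightarrow> bool)) pmf" where
  "program_pmf m = pmf_of_set (sample_space m)"

definition Phi_exists :: "nat \<Rightarrow> (nat \<Rightarrow> optype) \<Rightarrow> nat \<Rightarrow> bool" where
  "Phi_exists m ty \<mu> = (\<exists>i. 1 \<le> i \<and> i \<le> m \<and> ty i = ST \<and> card {j \<in> {i..m}. ty j = ST} = \<mu>)"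

definition Phi :: "nat \<Rightarrow> (nat \<Rightarrow> optype) \<Rightarrow> nat \<Rightarrow> nat" where
  "Phi m ty \<mu> = (GREATEST i. 1 \<le> i \<and> i \<le> m \<and> ty i = ST \<and> card {j \<in> {i..m}. ty j = ST} = \<mu>)"

definition Psi :: "nat \<Rightarrow> (nat \<Rightarrow> optype) \<Rightarrow> nat \<Rightarrow> int" where
  "Psi m ty \<mu> = int m + 1 - int \<mu> - int (Phi m ty \<mu>)"

definition F_event :: "memory_model \<Rightarrow> nat \<Rightarrow> nat \<Rightarrow> ((nat \<Rightarrow> optype) \<times> (nat \<Rightarrow> nat \<Rightarrow> bool)) set" where
  "F_event M m \<mu> = {(ty, c). \<forall>pos \<in> {m + 1 - \<mu>..m}.
       itype m ty (settle M m ty c m ! (pos - 1)) = ST}"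

definition cond_event :: "nat \<Rightarrow> nat \<Rightarrow> nat \<Rightarrow> ((nat \<Rightarrow> optype) \<times> (nat \<Rightarrow> nat \<Rightarrow> bool)) set" where
  "cond_event m \<mu> q = {(ty, c). Phi_exists m ty \<mu> \<and> Psi m ty \<mu> = int q}"

end

theory Submission
  imports Defs
begin

(* Let p = m+1-mu-q.  The conditioning event says exactly that x_p is a store
   and x_(p+1),...,x_m contain mu-1 stores, i.e. their types form a word w with q loads and
   mu-1 stores; under the uniform distribution w is uniform among the (mu+q-1 choose q)
   such words and independent of all other random choices.
   Under TSO stores never move, and a load only moves ahead of stores.  Hence, if every
   load x_r (p < r <= m) wins its first K_r coin flips, where K_r is the number of stores
   among x_p,...,x_(r-1), each such load jumps over the whole block of stores in front of
   it, and after round m the last mu positions hold stores: F_mu occurs.  For a fixed w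
   these forced flips have probability 2^(-flip_cost 1 w), so the conditional probability
   of F_mu is at least the average of 2^(-flip_cost 1 w) over all words w.  The sum of
   these weights satisfies a Pascal-like recurrence, from which the bound
   2^(1-q) - 2^(-mu q) follows by induction. *)

abbreviation n_loads :: "optype list \<Rightarrow> nat" where
  "n_loads w \<equiv> length (filter (\<lambda>x. x = LD) w)"

lemma optype_cases: "x = LD \<or> x = ST"
  by (cases x) auto

text \<open>Number of coin flips a word of types forces: a load preceded by s stores (the s
  stores before the word included) must win s flips to overtake all of them.\<close>
fun flip_cost :: "nat \<Rightarrow> optype list \<Rightarrow> nat" where
  "flip_cost s [] = 0"
| "flip_cost s (LD # w) = s + flip_cost s w"
| "flip_cost s (ST # w) = flip_cost (Suc s) w"

lemma flip_cost_Suc: "flip_cost (Suc s) w = flip_cost s w + n_loads w"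
proof (induction w arbitrary: s)
  case (Cons x w) then show ?case by (cases x) auto
qed simp

lemma flip_cost_snoc:
  "flip_cost s (w @ [x]) =
     flip_cost s w + (if x = LD then s + length (filter (\<lambda>y. y = ST) w) else 0)"
proof (induction w arbitrary: s)
  case Nil then show ?case by (cases x) auto
next
  case (Cons y w) then show ?case by (cases y) auto
qed

definition words :: "nat \<Rightarrow> nat \<Rightarrow> optype list set" where
  "words a b = {w. length w = a + b \<and> n_loads w = a}"

definition word_weight :: "nat \<Rightarrow> nat \<Rightarrow> real" where
  "word_weight a b = (\<Sum>w\<in>words a b. (1/2) ^ flip_cost 1 w)"

lemma finite_words: "finite (words a b)"
proof -
  have "words a b \<subseteq> {xs. set xs \<subseteq> {LD, ST} \<and> length xs = a + b}"
    unfolding words_def using optype_cases by blast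
  moreover have "finite {xs. set xs \<subseteq> {LD, ST} \<and> length xs = a + b}"
    by (rule finite_lists_length_eq) simp
  ultimately show ?thesis by (rule finite_subset)
qed

lemma Cons_in_words: "x # w \<in> words a b \<longleftrightarrow>
   (x = LD \<and> 0 < a \<and> w \<in> words (a - 1) b) \<or> (x = ST \<and> 0 < b \<and> w \<in> words a (b - 1))"
proof -
  have "n_loads w \<le> length w" by (rule length_filter_le)
  then show ?thesis unfolding words_def by (cases x) (auto simp del: length_filter_le)
qed

lemma words_0_0: "words 0 0 = {[]}"
  unfolding words_def by auto

lemma words_Suc_Suc:
  "words (Suc a) (Suc b) = (#) LD ` words a (Suc b) \<union> (#) ST ` words (Suc a) b"
proof (rule set_eqI)
  fix w show "w \<in> words (Suc a) (Suc b) \<longleftrightarrow> w \<in> (#) LD ` words a (Suc b) \<union> (#) ST ` words (Suc a) b"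
    by (cases w) (auto simp: Cons_in_words, auto simp: words_def)
qed

lemma words_Suc_0: "words (Suc a) 0 = (#) LD ` words a 0"
proof (rule set_eqI)
  fix w show "w \<in> words (Suc a) 0 \<longleftrightarrow> w \<in> (#) LD ` words a 0"
    by (cases w) (auto simp: Cons_in_words, auto simp: words_def)
qed

lemma words_0_Suc: "words 0 (Suc b) = (#) ST ` words 0 b"
proof (rule set_eqI)
  fix w show "w \<in> words 0 (Suc b) \<longleftrightarrow> w \<in> (#) ST ` words 0 b"
    by (cases w) (auto simp: Cons_in_words, auto simp: words_def)
qed

lemma card_words: "card (words a b) = (a + b) choose a"
proof (induction a arbitrary: b)
  case 0
  show ?case by (induction b) (simp_all add: words_0_0 words_0_Suc card_image)
next
  case (Suc a)
  show ?case
  proof (induction b)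
    case 0 then show ?case by (simp add: words_Suc_0 card_image Suc.IH)
  next
    case (Suc b)
    have "card (words (Suc a) (Suc b)) = card (words a (Suc b)) + card (words (Suc a) b)"
      unfolding words_Suc_Suc
      by (subst card_Un_disjoint) (auto simp: finite_words card_image)
    then show ?case using Suc.IH Suc.prems \<open>\<And>b. card (words a b) = (a + b) choose a\<close> by simp
  qed
qed

text \<open>The Pascal-like recurrences for the weights: a leading load costs one flip,
  a leading store adds one flip for each of the a loads behind it.\<close>
lemma word_weight_0: "word_weight 0 b = 1"
proof (induction b)
  case 0 then show ?case by (simp add: word_weight_def words_0_0)
next
  case (Suc b)
  have "word_weight 0 (Suc b) = (\<Sum>w\<in>words 0 b. (1/2) ^ flip_cost 1 (ST # w))"
    unfolding word_weight_def words_0_Suc by (subst sum.reindex) auto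
  also have "\<dots> = word_weight 0 b" unfolding word_weight_def
    by (rule sum.cong) (auto simp: flip_cost_Suc words_def)
  finally show ?case using Suc by simp
qed

lemma word_weight_Suc_0: "word_weight (Suc a) 0 = 1/2 * word_weight a 0"
proof -
  have "word_weight (Suc a) 0 = (\<Sum>w\<in>words a 0. (1/2) ^ flip_cost 1 (LD # w))"
    unfolding word_weight_def words_Suc_0 by (subst sum.reindex) auto
  also have "\<dots> = 1/2 * word_weight a 0"
    unfolding word_weight_def sum_distrib_left by simp
  finally show ?thesis .
qed

lemma word_weight_Suc_Suc:
  "word_weight (Suc a) (Suc b) = 1/2 * word_weight a (Suc b) + (1/2)^(Suc a) * word_weight (Suc a) b"
proof -
  have "word_weight (Suc a) (Suc b) = (\<Sum>w\<in>(#) LD ` words a (Suc b). (1/2) ^ flip_cost 1 w)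
       + (\<Sum>w\<in>(#) ST ` words (Suc a) b. (1/2) ^ flip_cost 1 w)"
    unfolding word_weight_def words_Suc_Suc
    by (rule sum.union_disjoint) (auto simp: finite_words)
  also have "(\<Sum>w\<in>(#) LD ` words a (Suc b). (1/2::real) ^ flip_cost 1 w)
     = 1/2 * word_weight a (Suc b)"
    unfolding word_weight_def sum_distrib_left by (subst sum.reindex) auto
  also have "(\<Sum>w\<in>(#) ST ` words (Suc a) b. (1/2::real) ^ flip_cost 1 w)
     = (1/2)^(Suc a) * word_weight (Suc a) b"
    unfolding word_weight_def sum_distrib_left
    by (subst sum.reindex) (auto intro!: sum.cong simp: flip_cost_Suc words_def power_add)
  finally show ?thesis .
qed

text \<open>The weight bound, first with natural powers of 1/2: the recurrence preserves
  2 h^a - h^((b+1) a) (h = 1/2) because h^(2a+1) dominates h^((b+2)a+1).\<close>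
lemma word_weight_lower_bound:
  "word_weight a b \<ge> 2 * (1/2) ^ a - (1/2) ^ ((b + 1) * a)"
proof (induction a arbitrary: b)
  case 0 then show ?case by (simp add: word_weight_0)
next
  case (Suc a)
  note IH_a = Suc.IH
  show ?case
  proof (induction b)
    case 0
    have "word_weight a 0 \<ge> (1/2) ^ a" using IH_a[of 0] by simp
    then show ?case by (simp add: word_weight_Suc_0)
  next
    case (Suc b)
    let ?h = "1/2 :: real"
    have A: "word_weight a (Suc b) \<ge> 2 * ?h ^ a - ?h ^ ((b + 2) * a)"
      using IH_a[of "Suc b"] by simp
    have B: "word_weight (Suc a) b \<ge> ?h ^ a - ?h ^ ((b + 1) * (a + 1))"
      using Suc.IH by simp
    have dominate: "?h ^ ((b + 2) * a + 1) \<le> ?h ^ (2 * a + 1)"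
      by (rule power_decreasing) auto
    have e1: "?h ^ Suc a * ?h ^ a = ?h ^ (2 * a + 1)"
      by (simp add: power_add[symmetric] mult_2)
    have e2: "?h ^ Suc a * ?h ^ ((b + 1) * (a + 1)) = ?h ^ ((b + 2) * (a + 1))"
      by (simp add: power_add[symmetric] algebra_simps)
    have "2 * ?h ^ Suc a - ?h ^ ((Suc b + 1) * Suc a)
        \<le> ?h ^ a - ?h ^ ((b + 2) * a + 1) + ?h ^ (2 * a + 1) - ?h ^ ((b + 2) * (a + 1))"
      using dominate by (simp add: algebra_simps)
    also have "\<dots> = 1/2 * (2 * ?h ^ a - ?h ^ ((b + 2) * a))
        + ?h ^ Suc a * (?h ^ a - ?h ^ ((b + 1) * (a + 1)))"
      unfolding right_diff_distrib e1 e2 by simp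
    also have "\<dots> \<le> word_weight (Suc a) (Suc b)"
      unfolding word_weight_Suc_Suc using A B by (intro add_mono mult_left_mono) auto
    finally show ?case .
  qed
qed

lemma half_power_powr: "(1/2::real) ^ n = 2 powr (- real n)"
  by (simp add: powr_minus powr_realpow power_one_over inverse_eq_divide)

lemma word_weight_lower_bound_powr:
  "word_weight a b \<ge> 2 powr (1 - real a) - 2 powr (- real ((b + 1) * a))"
proof -
  have "2 powr (1 - real a) = 2 powr 1 * 2 powr (- real a)"
    by (subst powr_add[symmetric]) simp
  then have "2 powr (1 - real a) = 2 * (1/2::real) ^ a"
    by (simp only: half_power_powr) simp
  then show ?thesis
    using word_weight_lower_bound[of a b] by (simp only: half_power_powr)
qed

text \<open>Moving the entry at index P to index P - n and shifting the n entries in between one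
  step to the right: the effect of n successful swaps of one bubbling instruction.\<close>
definition move_left :: "nat \<Rightarrow> nat \<Rightarrow> nat list \<Rightarrow> nat list" where
  "move_left P n S = map (\<lambda>i. if i = P - n then S ! P else if P - n < i \<and> i \<le> P then S ! (i - 1) else S ! i)
     [0..<length S]"

lemma move_left_0: "move_left P 0 S = S"
  by (rule nth_equalityI) (auto simp: move_left_def)

lemma move_left_shifted: "i < length S \<Longrightarrow> P - n < i \<Longrightarrow> i \<le> P \<Longrightarrow> move_left P n S ! i = S ! (i - 1)"
  by (simp add: move_left_def)

lemma bubble_length: "length (bubble M m ty coin P j S) = length S"
  by (induction P arbitrary: j S) (auto simp: Let_def)

lemma bubble_frame: "P < i \<Longrightarrow> bubble M m ty coin P j S ! i = S ! i"
  by (induction P arbitrary: j S) (auto simp: Let_def)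

lemma bubble_pass:
  assumes "n \<le> P" "P < length S"
    and "\<forall>i<n. M (itype m ty (S ! (P - Suc i))) (itype m ty (S ! P))
                \<and> \<not> (S ! P = m + 2 \<and> S ! (P - Suc i) = m + 1) \<and> coin (j + i)"
  shows "bubble M m ty coin P j S = bubble M m ty coin (P - n) (j + n) (move_left P n S)"
  using assms
proof (induction n arbitrary: P j S)
  case 0 then show ?case by (simp add: move_left_0)
next
  case (Suc n)
  then obtain P0 where P0: "P = Suc P0" by (cases P) auto
  define S1 where "S1 = S[P0 := S ! P, P := S ! P0]"
  have first_swap: "bubble M m ty coin P j S = bubble M m ty coin P0 (Suc j) S1"
    using Suc.prems(3)[rule_format, of 0] unfolding P0 S1_def by (simp add: Let_def)
  have S1_P0: "S1 ! P0 = S ! P" and S1_below: "\<And>i. i < P0 \<Longrightarrow> S1 ! i = S ! i"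
    using Suc.prems P0 by (simp_all add: S1_def nth_list_update)
  have rest: "bubble M m ty coin P0 (Suc j) S1 = bubble M m ty coin (P0 - n) (Suc j + n) (move_left P0 n S1)"
  proof (rule Suc.IH)
    show "n \<le> P0" "P0 < length S1" using Suc.prems P0 by (simp_all add: S1_def)
    show "\<forall>i<n. M (itype m ty (S1 ! (P0 - Suc i))) (itype m ty (S1 ! P0)) \<and>
          \<not> (S1 ! P0 = m + 2 \<and> S1 ! (P0 - Suc i) = m + 1) \<and> coin (Suc j + i)"
    proof (intro allI impI)
      fix i assume i: "i < n"
      have "S1 ! (P0 - Suc i) = S ! (P - Suc (Suc i))"
        using S1_below[of "P0 - Suc i"] i Suc.prems P0 by simp
      then show "M (itype m ty (S1 ! (P0 - Suc i))) (itype m ty (S1 ! P0)) \<and>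
          \<not> (S1 ! P0 = m + 2 \<and> S1 ! (P0 - Suc i) = m + 1) \<and> coin (Suc j + i)"
        using Suc.prems(3)[rule_format, of "Suc i"] i S1_P0 by simp
    qed
  qed
  have "move_left P0 n S1 = move_left P (Suc n) S"
    by (rule nth_equalityI) (use Suc.prems P0 in \<open>auto simp: move_left_def S1_def nth_list_update\<close>)
  then show ?case using first_swap rest P0 by simp
qed

lemma settle_frame: "k \<le> m + 2 \<Longrightarrow> length (settle M m ty c k) = m + 2 \<and>
   (\<forall>i. k \<le> i \<longrightarrow> i < m + 2 \<longrightarrow> settle M m ty c k ! i = Suc i)"
  by (induction k) (simp_all add: bubble_length bubble_frame)

lemma bubble_store_stays: "itype m ty (S ! k) = ST \<Longrightarrow> bubble TSO m ty coin k j S = S"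
  by (cases k) (simp_all add: Let_def TSO_def)

lemma bubble_load_passes_stores:
  assumes "k < length S" "n \<le> k" and load: "itype m ty (S ! k) = LD"
    and stores: "\<forall>i. k - n \<le> i \<and> i < k \<longrightarrow> itype m ty (S ! i) = ST"
    and coins: "\<forall>j<n. coin j" and i: "k - n < i" "i \<le> k"
  shows "bubble TSO m ty coin k 0 S ! i = S ! (i - 1)"
proof -
  have not_critical: "S ! k \<noteq> m + 2" using load by (auto simp: itype_def)
  have "bubble TSO m ty coin k 0 S = bubble TSO m ty coin (k - n) (0 + n) (move_left k n S)"
    by (rule bubble_pass) (use assms not_critical in \<open>auto simp: TSO_def\<close>)
  then have "bubble TSO m ty coin k 0 S ! i = move_left k n S ! i"
    using bubble_frame[OF i(1)] by simp
  also have "\<dots> = S ! (i - 1)" using assms by (intro move_left_shifted) auto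
  finally show ?thesis .
qed

definition stores_from :: "nat \<Rightarrow> (nat \<Rightarrow> optype) \<Rightarrow> nat \<Rightarrow> nat" where
  "stores_from p ty r = card {s \<in> {p..<r}. ty s = ST}"

lemma stores_from_le: "stores_from p ty r \<le> r - p"
proof -
  have "stores_from p ty r \<le> card {p..<r}" unfolding stores_from_def by (rule card_mono) auto
  then show ?thesis by simp
qed

lemma stores_from_Suc:
  "p \<le> r \<Longrightarrow> stores_from p ty (Suc r) = stores_from p ty r + (if ty r = ST then 1 else 0)"
proof -
  assume "p \<le> r"
  then have "{s \<in> {p..<Suc r}. ty s = ST} =
      (if ty r = ST then insert r {s \<in> {p..<r}. ty s = ST} else {s \<in> {p..<r}. ty s = ST})"
    by (auto simp: less_Suc_eq)
  then show ?thesis unfolding stores_from_def by simp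
qed

lemma stores_from_empty: "r \<le> p \<Longrightarrow> stores_from p ty r = 0"
  unfolding stores_from_def by simp

lemma settle_store_block:
  assumes p: "1 \<le> p"
    and E: "\<forall>r j. p < r \<and> r \<le> m \<and> ty r = LD \<and> j < stores_from p ty r \<longrightarrow> c r j"
  shows "k \<le> m \<Longrightarrow> \<forall>i. k - stores_from p ty (Suc k) \<le> i \<and> i < k \<longrightarrow>
           itype m ty (settle TSO m ty c k ! i) = ST"
proof (induction k)
  case 0 then show ?case by simp
next
  case (Suc k)
  define S where "S = settle TSO m ty c k"
  define n where "n = stores_from p ty (Suc k)"
  have len: "k < length S" and Sk: "S ! k = Suc k"
    using settle_frame[of k m TSO ty c] Suc.prems unfolding S_def by auto
  have IH: "\<And>i. k - n \<le> i \<Longrightarrow> i < k \<Longrightarrow> itype m ty (S ! i) = ST"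
    using Suc unfolding S_def n_def by auto
  have round: "settle TSO m ty c (Suc k) = bubble TSO m ty (c (Suc k)) k 0 S"
    by (simp add: S_def)
  have type_k: "itype m ty (S ! k) = ty (Suc k)" using Sk Suc.prems by (simp add: itype_def)
  show ?case
  proof (cases "p \<le> Suc k")
    case False then show ?thesis by (auto simp: stores_from_empty)
  next
    case True
    show ?thesis
    proof (cases "ty (Suc k)")
      case ST
      then have "stores_from p ty (Suc (Suc k)) = Suc n" using stores_from_Suc[OF True] n_def by simp
      then show ?thesis using round bubble_store_stays[of m ty S k] type_k ST IH
        by (auto simp: less_Suc_eq)
    next
      case LD
      have count: "stores_from p ty (Suc (Suc k)) = n" using stores_from_Suc[OF True] LD n_def by simp
      have nk: "n \<le> k" using stores_from_le[of p ty "Suc k"] n_def p by simp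
      have coins: "\<forall>j<n. c (Suc k) j"
      proof (intro allI impI)
        fix j assume "j < n"
        then have "p < Suc k" using True n_def stores_from_empty[of "Suc k" p ty] by (cases "p = Suc k") auto
        then show "c (Suc k) j" using E Suc.prems LD \<open>j < n\<close> n_def by auto
      qed
      show ?thesis
      proof (intro allI impI)
        fix i assume i: "Suc k - stores_from p ty (Suc (Suc k)) \<le> i \<and> i < Suc k"
        then have "settle TSO m ty c (Suc k) ! i = S ! (i - 1)"
          unfolding round count using len nk LD type_k IH coins
          by (intro bubble_load_passes_stores) auto
        moreover have "k - n \<le> i - 1" "i - 1 < k" using i count nk by linarith+
        ultimately show "itype m ty (settle TSO m ty c (Suc k) ! i) = ST" using IH by simp
      qed
    qed
  qed
qed

definition type_space :: "nat \<Rightarrow> (nat \<Rightarrow> optype) set" where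
  "type_space m = {ty. \<forall>i. i \<notin> {1..m} \<longrightarrow> ty i = LD}"

definition coin_space :: "nat \<Rightarrow> (nat \<Rightarrow> nat \<Rightarrow> bool) set" where
  "coin_space m = {c. \<forall>r j. (r \<notin> {1..m+2} \<or> m + 2 \<le> j) \<longrightarrow> \<not> c r j}"

definition coin_slots :: "nat \<Rightarrow> (nat \<times> nat) set" where
  "coin_slots m = {1..m+2} \<times> {..<m+2}"

lemma sample_space_product: "sample_space m = type_space m \<times> coin_space m"
  unfolding sample_space_def type_space_def coin_space_def by auto

lemma finite_type_space: "finite (type_space m)"
proof -
  have "inj_on (\<lambda>ty. {i. ty i = ST}) (type_space m)"
  proof (rule inj_onI, rule ext)
    fix x y i assume "{i. x i = ST} = {i. y i = ST}"
    then show "x i = y i" using optype_cases[of "x i"] optype_cases[of "y i"]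
      by (metis (mono_tags, lifting) mem_Collect_eq optype.distinct(1))
  qed
  moreover have "(\<lambda>ty. {i. ty i = ST}) ` type_space m \<subseteq> Pow {1..m}"
    unfolding type_space_def by auto
  ultimately show ?thesis by (meson finite_Pow_iff finite_atLeastAtMost finite_subset inj_on_finite)
qed

lemma card_coins_forced:
  assumes D: "D \<subseteq> coin_slots m"
  shows "card {c \<in> coin_space m. \<forall>(r, j)\<in>D. c r j} = 2 ^ (card (coin_slots m) - card D)"
    and "finite {c \<in> coin_space m. \<forall>(r, j)\<in>D. c r j}"
proof -
  have fin_slots: "finite (coin_slots m)" unfolding coin_slots_def by simp
  have bij: "bij_betw (\<lambda>c. {(r, j). c r j} - D) {c \<in> coin_space m. \<forall>(r, j)\<in>D. c r j}
               (Pow (coin_slots m - D))"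
  proof (rule bij_betw_byWitness[where f' = "\<lambda>X r j. (r, j) \<in> X \<union> D"])
    show "\<forall>c\<in>{c \<in> coin_space m. \<forall>(r, j)\<in>D. c r j}. (\<lambda>r j. (r, j) \<in> ({(r, j). c r j} - D) \<union> D) = c"
      by (auto intro!: ext)
    show "\<forall>X\<in>Pow (coin_slots m - D). {(r, j). (r, j) \<in> X \<union> D} - D = X" by auto
    show "(\<lambda>c. {(r, j). c r j} - D) ` {c \<in> coin_space m. \<forall>(r, j)\<in>D. c r j} \<subseteq> Pow (coin_slots m - D)"
      unfolding coin_space_def coin_slots_def
      by (auto simp: not_le) (metis gr0I le_simps(3), metis not_less, metis not_less)
    show "(\<lambda>X r j. (r, j) \<in> X \<union> D) ` Pow (coin_slots m - D) \<subseteq> {c \<in> coin_space m. \<forall>(r, j)\<in>D. c r j}"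
      using D unfolding coin_space_def coin_slots_def by auto
  qed
  have "finite D" using D fin_slots finite_subset by blast
  then show "card {c \<in> coin_space m. \<forall>(r, j)\<in>D. c r j} = 2 ^ (card (coin_slots m) - card D)"
    using bij_betw_same_card[OF bij] fin_slots D by (simp add: card_Pow card_Diff_subset)
  show "finite {c \<in> coin_space m. \<forall>(r, j)\<in>D. c r j}"
    using bij_betw_finite[OF bij] fin_slots by simp
qed

lemma card_coin_space: "card (coin_space m) = 2 ^ card (coin_slots m)" "finite (coin_space m)"
  using card_coins_forced[of "{}" m] by auto

lemma prob_program:
  shows "measure_pmf.prob (program_pmf m) A = card (sample_space m \<inter> A) / card (sample_space m)"
    and "finite (sample_space m)" and "card (sample_space m) > 0"
proof -
  show fin: "finite (sample_space m)"
    unfolding sample_space_product using finite_type_space card_coin_space(2) by simp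
  have "((\<lambda>_. LD), (\<lambda>_ _. False)) \<in> sample_space m" unfolding sample_space_def by simp
  then have ne: "sample_space m \<noteq> {}" by auto
  then show "card (sample_space m) > 0" using fin by (simp add: card_gt_0_iff)
  show "measure_pmf.prob (program_pmf m) A = card (sample_space m \<inter> A) / card (sample_space m)"
    unfolding program_pmf_def by (rule measure_pmf_of_set[OF ne fin])
qed

lemma Phi_spec:
  assumes "Phi_exists m ty \<mu>"
  shows "1 \<le> Phi m ty \<mu> \<and> Phi m ty \<mu> \<le> m \<and> ty (Phi m ty \<mu>) = ST
           \<and> card {j \<in> {Phi m ty \<mu>..m}. ty j = ST} = \<mu>"
proof -
  define P where "P i \<longleftrightarrow> 1 \<le> i \<and> i \<le> m \<and> ty i = ST \<and> card {j \<in> {i..m}. ty j = ST} = \<mu>" for i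
  obtain i where "P i" using assms unfolding Phi_exists_def P_def by blast
  then have "P (GREATEST i. P i)" by (rule GreatestI_nat[where b = m]) (auto simp: P_def)
  then show ?thesis unfolding Phi_def P_def .
qed

text \<open>Since Psi_mu = q counts the loads after Phi_mu, the condition needs mu + q \<le> m.\<close>
lemma cond_event_size: "(ty, c) \<in> cond_event m \<mu> q \<Longrightarrow> \<mu> + q \<le> m"
  using Phi_spec[of m ty \<mu>] unfolding cond_event_def Psi_def by auto

definition cond_types :: "nat \<Rightarrow> nat \<Rightarrow> nat \<Rightarrow> (nat \<Rightarrow> optype) set" where
  "cond_types m \<mu> p = {ty \<in> type_space m. ty p = ST \<and> card {j \<in> {p<..m}. ty j = ST} = \<mu> - 1}"

lemma cond_char:
  assumes mu: "1 \<le> \<mu>" and mq: "\<mu> + q \<le> m" and p_def: "p = m + 1 - \<mu> - q"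
  shows "(Phi_exists m ty \<mu> \<and> Psi m ty \<mu> = int q) \<longleftrightarrow>
         (ty p = ST \<and> card {j \<in> {p<..m}. ty j = ST} = \<mu> - 1)"
proof -
  have split: "card {j \<in> {i..m}. ty j = ST} = Suc (card {j \<in> {i<..m}. ty j = ST})"
    if "ty i = ST" "i \<le> m" for i
  proof -
    have "{j \<in> {i..m}. ty j = ST} = insert i {j \<in> {i<..m}. ty j = ST}" using that by auto
    then show ?thesis by simp
  qed
  show ?thesis
  proof
    assume h: "Phi_exists m ty \<mu> \<and> Psi m ty \<mu> = int q"
    then have "Phi m ty \<mu> = p" using p_def mq unfolding Psi_def by linarith
    then show "ty p = ST \<and> card {j \<in> {p<..m}. ty j = ST} = \<mu> - 1"
      using Phi_spec[of m ty \<mu>] h split[of p] by auto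
  next
    assume h: "ty p = ST \<and> card {j \<in> {p<..m}. ty j = ST} = \<mu> - 1"
    let ?P = "\<lambda>i. 1 \<le> i \<and> i \<le> m \<and> ty i = ST \<and> card {j \<in> {i..m}. ty j = ST} = \<mu>"
    have Pp: "?P p" using h split[of p] mu mq p_def by auto
    have "(GREATEST i. ?P i) = p"
    proof (rule Greatest_equality)
      fix y assume y: "?P y"
      show "y \<le> p"
      proof (rule ccontr)
        assume "\<not> y \<le> p"
        then have "card {j \<in> {y..m}. ty j = ST} \<le> card {j \<in> {p<..m}. ty j = ST}"
          by (intro card_mono) auto
        then show False using y h mu by simp
      qed
    qed (rule Pp)
    then show "Phi_exists m ty \<mu> \<and> Psi m ty \<mu> = int q"
      using Pp p_def mq unfolding Phi_exists_def Psi_def Phi_def by auto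
  qed
qed

lemma cond_event_product:
  assumes "1 \<le> \<mu>" and "\<mu> + q \<le> m"
  shows "sample_space m \<inter> cond_event m \<mu> q = cond_types m \<mu> (m + 1 - \<mu> - q) \<times> coin_space m"
  using cond_char[OF assms refl] unfolding sample_space_product cond_event_def cond_types_def by auto

lemma length_filter_map_upt:
  "length (filter P (map ty [a..<b])) = card {i \<in> {a..<b}. P (ty i)}"
proof (induction b)
  case (Suc b)
  show ?case
  proof (cases "a \<le> b")
    case True
    have "{i \<in> {a..<Suc b}. P (ty i)} =
        (if P (ty b) then insert b {i \<in> {a..<b}. P (ty i)} else {i \<in> {a..<b}. P (ty i)})"
      using True by (auto simp: less_Suc_eq)
    then show ?thesis using Suc True by simp
  qed simp
qed simp

lemma flip_cost_map_upt: "a \<le> b \<Longrightarrow> flip_cost s (map ty [a..<b]) =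
   (\<Sum>r\<in>{r \<in> {a..<b}. ty r = LD}. s + card {t \<in> {a..<r}. ty t = ST})"
proof (induction b rule: dec_induct)
  case base then show ?case by simp
next
  case (step b)
  have "{r \<in> {a..<Suc b}. ty r = LD} =
      (if ty b = LD then insert b {r \<in> {a..<b}. ty r = LD} else {r \<in> {a..<b}. ty r = LD})"
    using step by (auto simp: less_Suc_eq)
  moreover have "map ty [a..<Suc b] = map ty [a..<b] @ [ty b]" using step by simp
  ultimately show ?case
    using step length_filter_map_upt[of "\<lambda>x. x = ST" ty a b] by (simp only: flip_cost_snoc) simp
qed

definition forced_flips :: "nat \<Rightarrow> nat \<Rightarrow> (nat \<Rightarrow> optype) \<Rightarrow> (nat \<times> nat) set" where
  "forced_flips m p ty = {(r, j). p < r \<and> r \<le> m \<and> ty r = LD \<and> j < stores_from p ty r}"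

lemma forced_flips_slots: "forced_flips m p ty \<subseteq> coin_slots m"
proof
  fix x assume "x \<in> forced_flips m p ty"
  then obtain r j where "x = (r, j)" "p < r" "r \<le> m" "j < stores_from p ty r"
    unfolding forced_flips_def by auto
  then show "x \<in> coin_slots m" using stores_from_le[of p ty r] unfolding coin_slots_def by auto
qed

lemma card_forced_flips:
  assumes "ty p = ST" "p \<le> m"
  shows "card (forced_flips m p ty) = flip_cost 1 (map ty [Suc p..<Suc m])"
proof -
  define R where "R = {r \<in> {Suc p..<Suc m}. ty r = LD}"
  have "forced_flips m p ty = Sigma R (\<lambda>r. {..<stores_from p ty r})"
    unfolding forced_flips_def R_def by auto
  then have "card (forced_flips m p ty) = (\<Sum>r\<in>R. stores_from p ty r)" by (simp add: R_def)
  also have "\<dots> = (\<Sum>r\<in>R. 1 + card {t \<in> {Suc p..<r}. ty t = ST})"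
  proof (rule sum.cong)
    fix r assume "r \<in> R"
    then have "{s \<in> {p..<r}. ty s = ST} = insert p {t \<in> {Suc p..<r}. ty t = ST}"
      using assms unfolding R_def by auto
    then show "stores_from p ty r = 1 + card {t \<in> {Suc p..<r}. ty t = ST}"
      unfolding stores_from_def by simp
  qed simp
  also have "\<dots> = flip_cost 1 (map ty [Suc p..<Suc m])"
    unfolding R_def using flip_cost_map_upt[of "Suc p" "Suc m" 1 ty] assms by simp
  finally show ?thesis .
qed

lemma forced_flips_imply_F:
  assumes mu: "1 \<le> \<mu>" and mq: "\<mu> + q \<le> m" and p_def: "p = m + 1 - \<mu> - q"
    and ty: "ty \<in> cond_types m \<mu> p" and c: "\<forall>(r, j)\<in>forced_flips m p ty. c r j"
  shows "(ty, c) \<in> F_event TSO m \<mu>"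
proof -
  have p: "1 \<le> p" "p \<le> m" using mu mq p_def by auto
  have "{s \<in> {p..<Suc m}. ty s = ST} = insert p {j \<in> {p<..m}. ty j = ST}"
    using ty p unfolding cond_types_def by auto
  then have block: "stores_from p ty (Suc m) = \<mu>"
    using ty mu unfolding stores_from_def cond_types_def by simp
  have "\<forall>r j. p < r \<and> r \<le> m \<and> ty r = LD \<and> j < stores_from p ty r \<longrightarrow> c r j"
    using c unfolding forced_flips_def by auto
  then have block_stores: "\<forall>i. m - stores_from p ty (Suc m) \<le> i \<and> i < m \<longrightarrow>
      itype m ty (settle TSO m ty c m ! i) = ST"
    by (rule settle_store_block[OF p(1)]) simp
  have "\<forall>pos\<in>{m + 1 - \<mu>..m}. itype m ty (settle TSO m ty c m ! (pos - 1)) = ST"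
  proof
    fix pos assume "pos \<in> {m + 1 - \<mu>..m}"
    then have "m - \<mu> \<le> pos - 1" "pos - 1 < m" using mu mq by auto
    then show "itype m ty (settle TSO m ty c m ! (pos - 1)) = ST" using block_stores block by auto
  qed
  then show ?thesis unfolding F_event_def by simp
qed

declare upt_Suc[simp del] \<comment> \<open>keeps [Suc p..<Suc m] intact for the index arithmetic below\<close>

definition prefix_types :: "nat \<Rightarrow> nat \<Rightarrow> (nat \<Rightarrow> optype) set" where
  "prefix_types m p = {a \<in> type_space m. a p = ST \<and> (\<forall>i>p. a i = LD)}"

definition join_types :: "nat \<Rightarrow> nat \<Rightarrow> (nat \<Rightarrow> optype) \<times> optype list \<Rightarrow> nat \<Rightarrow> optype" where
  "join_types m p = (\<lambda>(a, w) i. if p < i \<and> i \<le> m then w ! (i - Suc p) else a i)"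

lemma map_join_types:
  assumes "length w = m - p" "p \<le> m"
  shows "map (join_types m p (a, w)) [Suc p..<Suc m] = w"
proof (rule nth_equalityI)
  fix k assume "k < length (map (join_types m p (a, w)) [Suc p..<Suc m])"
  then have "k < m - p" by simp
  moreover then have "Suc (p + k) \<le> m" by arith
  ultimately show "map (join_types m p (a, w)) [Suc p..<Suc m] ! k = w ! k"
    by (simp add: join_types_def)
qed (use assms in simp)

lemma count_ST_map: "card {j \<in> {p<..m}. ty j = ST} = length (filter (\<lambda>x. x = ST) (map ty [Suc p..<Suc m]))"
proof -
  have "{j \<in> {p<..m}. ty j = ST} = {j \<in> {Suc p..<Suc m}. ty j = ST}" by auto
  then show ?thesis using length_filter_map_upt[of "\<lambda>x. x = ST" ty "Suc p" "Suc m"] by simp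
qed

lemma n_stores_eq: "length (filter (\<lambda>x. x = ST) w) = length w - n_loads w"
proof (induction w)
  case (Cons x w)
  have "n_loads w \<le> length w" by (rule length_filter_le)
  then show ?case using Cons by (cases x) (auto simp del: length_filter_le)
qed simp

definition split_types :: "nat \<Rightarrow> nat \<Rightarrow> (nat \<Rightarrow> optype) \<Rightarrow> (nat \<Rightarrow> optype) \<times> optype list" where
  "split_types m p ty = ((\<lambda>i. if p < i then LD else ty i), map ty [Suc p..<Suc m])"

lemma split_join_types:
  assumes "a \<in> prefix_types m p" "length w = m - p" "p \<le> m"
  shows "split_types m p (join_types m p (a, w)) = (a, w)"
proof -
  have "(\<lambda>i. if p < i then LD else join_types m p (a, w) i) = a"
    using assms(1) unfolding prefix_types_def join_types_def by (auto intro!: ext)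
  then show ?thesis unfolding split_types_def using map_join_types[OF assms(2,3)] by simp
qed

lemma join_split_types:
  assumes "ty \<in> type_space m"
  shows "join_types m p (split_types m p ty) = ty"
proof
  fix i
  show "join_types m p (split_types m p ty) i = ty i"
  proof (cases "p < i \<and> i \<le> m")
    case True
    then have "i - Suc p < length [Suc p..<Suc m]" by (simp, arith)
    then show ?thesis using True by (simp add: join_types_def split_types_def)
  next
    case False
    then show ?thesis using assms unfolding join_types_def split_types_def type_space_def by auto
  qed
qed

lemma join_types_mem:
  assumes p: "p \<le> m" "m - p = q + (\<mu> - 1)"
    and a: "a \<in> prefix_types m p" and w: "w \<in> words q (\<mu> - 1)"
  shows "join_types m p (a, w) \<in> cond_types m \<mu> p"
proof -
  have lw: "length w = m - p" and lf: "n_loads w = q" using w p unfolding words_def by auto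
  have "card {j \<in> {p<..m}. join_types m p (a, w) j = ST} = length (filter (\<lambda>x. x = ST) w)"
    using count_ST_map[of p m "join_types m p (a, w)"] map_join_types[OF lw p(1)] by simp
  also have "\<dots> = \<mu> - 1" using n_stores_eq[of w] lw lf p by simp
  finally show ?thesis
    using a p unfolding cond_types_def type_space_def prefix_types_def join_types_def by auto
qed

lemma split_types_mem:
  assumes p: "p \<le> m" "m - p = q + (\<mu> - 1)" and ty: "ty \<in> cond_types m \<mu> p"
  shows "split_types m p ty \<in> prefix_types m p \<times> words q (\<mu> - 1)"
proof -
  let ?w = "map ty [Suc p..<Suc m]"
  have "length (filter (\<lambda>x. x = ST) ?w) = \<mu> - 1"
    using ty count_ST_map[of p m ty] unfolding cond_types_def by simp
  moreover have "length ?w = q + (\<mu> - 1)" using p by simp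
  moreover have "n_loads ?w \<le> length ?w" by (rule length_filter_le)
  ultimately have "?w \<in> words q (\<mu> - 1)"
    unfolding words_def using n_stores_eq[of ?w] by (simp del: length_filter_le length_map)
  moreover have "(\<lambda>i. if p < i then LD else ty i) \<in> prefix_types m p"
    using ty p unfolding prefix_types_def cond_types_def type_space_def by auto
  ultimately show ?thesis unfolding split_types_def by simp
qed

lemma join_types_bij:
  assumes mu: "1 \<le> \<mu>" and mq: "\<mu> + q \<le> m" and p_def: "p = m + 1 - \<mu> - q"
  shows "bij_betw (join_types m p) (prefix_types m p \<times> words q (\<mu> - 1)) (cond_types m \<mu> p)"
proof (rule bij_betw_byWitness[where f' = "split_types m p"])
  have p: "p \<le> m" "m - p = q + (\<mu> - 1)" using mu mq p_def by auto
  show "\<forall>x\<in>prefix_types m p \<times> words q (\<mu> - 1). split_types m p (join_types m p x) = x"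
    using split_join_types p unfolding words_def by auto
  show "\<forall>ty\<in>cond_types m \<mu> p. join_types m p (split_types m p ty) = ty"
    using join_split_types unfolding cond_types_def by blast
  show "join_types m p ` (prefix_types m p \<times> words q (\<mu> - 1)) \<subseteq> cond_types m \<mu> p"
    using join_types_mem[OF p] by auto
  show "split_types m p ` cond_types m \<mu> p \<subseteq> prefix_types m p \<times> words q (\<mu> - 1)"
    using split_types_mem[OF p] by blast
qed

lemma prefix_types_nonempty: "1 \<le> p \<Longrightarrow> p \<le> m \<Longrightarrow> card (prefix_types m p) > 0"
proof -
  assume p: "1 \<le> p" "p \<le> m"
  have "finite (prefix_types m p)"
    using finite_type_space finite_subset unfolding prefix_types_def by fastforce
  moreover have "(\<lambda>i. if i = p then ST else LD) \<in> prefix_types m p"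
    using p unfolding prefix_types_def type_space_def by auto
  ultimately show ?thesis by (metis card_gt_0_iff empty_iff)
qed

lemma sum_cond_types:
  assumes mu: "1 \<le> \<mu>" and mq: "\<mu> + q \<le> m" and p_def: "p = m + 1 - \<mu> - q"
  shows "(\<Sum>ty\<in>cond_types m \<mu> p. (1/2::real) ^ card (forced_flips m p ty))
           = real (card (prefix_types m p)) * word_weight q (\<mu> - 1)"
    and "card (cond_types m \<mu> p) = card (prefix_types m p) * card (words q (\<mu> - 1))"
proof -
  have p: "p \<le> m" "m - p = q + (\<mu> - 1)" using mu mq p_def by auto
  have bij: "bij_betw (join_types m p) (prefix_types m p \<times> words q (\<mu> - 1)) (cond_types m \<mu> p)"
    by (rule join_types_bij[OF mu mq p_def])
  have "(\<Sum>ty\<in>cond_types m \<mu> p. (1/2::real) ^ card (forced_flips m p ty))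
      = (\<Sum>x\<in>prefix_types m p \<times> words q (\<mu> - 1). (1/2::real) ^ card (forced_flips m p (join_types m p x)))"
    by (rule sum.reindex_bij_betw[OF bij, symmetric])
  also have "\<dots> = (\<Sum>x\<in>prefix_types m p \<times> words q (\<mu> - 1). (1/2::real) ^ flip_cost 1 (snd x))"
  proof (rule sum.cong)
    fix x assume x: "x \<in> prefix_types m p \<times> words q (\<mu> - 1)"
    then obtain a w where aw: "x = (a, w)" "w \<in> words q (\<mu> - 1)" by auto
    have lw: "length w = m - p" using aw p unfolding words_def by simp
    have "join_types m p x p = ST" using bij x unfolding bij_betw_def cond_types_def by auto
    then have "card (forced_flips m p (join_types m p x)) = flip_cost 1 (map (join_types m p x) [Suc p..<Suc m])"
      using card_forced_flips p by blast
    then show "(1/2::real) ^ card (forced_flips m p (join_types m p x)) = (1/2) ^ flip_cost 1 (snd x)"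
      using map_join_types[OF lw p(1)] aw by simp
  qed simp
  also have "\<dots> = (\<Sum>a\<in>prefix_types m p. \<Sum>w\<in>words q (\<mu> - 1). (1/2::real) ^ flip_cost 1 w)"
    by (subst sum.cartesian_product) (simp add: case_prod_beta)
  also have "\<dots> = real (card (prefix_types m p)) * word_weight q (\<mu> - 1)"
    by (simp add: word_weight_def)
  finally show "(\<Sum>ty\<in>cond_types m \<mu> p. (1/2::real) ^ card (forced_flips m p ty))
           = real (card (prefix_types m p)) * word_weight q (\<mu> - 1)" .
  show "card (cond_types m \<mu> p) = card (prefix_types m p) * card (words q (\<mu> - 1))"
    using bij_betw_same_card[OF bij] card_cartesian_product by metis
qed

definition forced_event :: "nat \<Rightarrow> nat \<Rightarrow> nat \<Rightarrow> ((nat \<Rightarrow> optype) \<times> (nat \<Rightarrow> nat \<Rightarrow> bool)) set" where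
  "forced_event m \<mu> p =
     Sigma (cond_types m \<mu> p) (\<lambda>ty. {c \<in> coin_space m. \<forall>(r, j)\<in>forced_flips m p ty. c r j})"

lemma forced_event_subset:
  assumes "1 \<le> \<mu>" "\<mu> + q \<le> m" "p = m + 1 - \<mu> - q"
  shows "forced_event m \<mu> p \<subseteq> sample_space m \<inter> (F_event TSO m \<mu> \<inter> cond_event m \<mu> q)"
  using forced_flips_imply_F[OF assms] cond_event_product[OF assms(1,2)] assms(3)
  unfolding forced_event_def by blast

lemma card_forced_event:
  assumes mu: "1 \<le> \<mu>" and mq: "\<mu> + q \<le> m" and p_def: "p = m + 1 - \<mu> - q"
  shows "real (card (forced_event m \<mu> p))
           = 2 ^ card (coin_slots m) * (real (card (prefix_types m p)) * word_weight q (\<mu> - 1))"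
proof -
  let ?B = "card (coin_slots m)"
  have fin: "finite (cond_types m \<mu> p)"
    using finite_type_space unfolding cond_types_def by simp
  have "real (card (forced_event m \<mu> p)) = (\<Sum>ty\<in>cond_types m \<mu> p. 2 ^ (?B - card (forced_flips m p ty)))"
    unfolding forced_event_def using fin card_coins_forced[OF forced_flips_slots] by simp
  also have "\<dots> = (\<Sum>ty\<in>cond_types m \<mu> p. 2 ^ ?B * (1/2::real) ^ card (forced_flips m p ty))"
  proof (rule sum.cong)
    fix ty
    have "card (forced_flips m p ty) \<le> ?B"
      by (rule card_mono[OF _ forced_flips_slots]) (simp add: coin_slots_def)
    then have "(2::real) ^ ?B = 2 ^ (?B - card (forced_flips m p ty)) * 2 ^ card (forced_flips m p ty)"
      by (simp add: power_add[symmetric])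
    then show "(2::real) ^ (?B - card (forced_flips m p ty)) = 2 ^ ?B * (1/2) ^ card (forced_flips m p ty)"
      by (simp add: power_one_over field_simps)
  qed simp
  also have "\<dots> = 2 ^ ?B * (real (card (prefix_types m p)) * word_weight q (\<mu> - 1))"
    by (simp add: sum_distrib_left[symmetric] sum_cond_types(1)[OF mu mq p_def])
  finally show ?thesis .
qed

lemma conditional_frequency_bound:
  assumes mu: "1 \<le> \<mu>" and mq: "\<mu> + q \<le> m"
  shows "card (sample_space m \<inter> (F_event TSO m \<mu> \<inter> cond_event m \<mu> q))
           / card (sample_space m \<inter> cond_event m \<mu> q)
         \<ge> word_weight q (\<mu> - 1) / ((\<mu> + q - 1) choose q)"
proof -
  define p where "p = m + 1 - \<mu> - q"
  have p: "1 \<le> p" "p \<le> m" using mu mq p_def by auto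
  let ?B = "card (coin_slots m)" and ?A = "card (prefix_types m p)"
  have words: "card (words q (\<mu> - 1)) = (\<mu> + q - 1) choose q"
    unfolding card_words using mu by (simp add: add.commute)
  have cond: "real (card (sample_space m \<inter> cond_event m \<mu> q)) = ?A * ((\<mu> + q - 1) choose q) * 2 ^ ?B"
    unfolding cond_event_product[OF mu mq] card_cartesian_product p_def[symmetric]
      sum_cond_types(2)[OF mu mq p_def] card_coin_space(1) words by simp
  have "card (forced_event m \<mu> p) \<le> card (sample_space m \<inter> (F_event TSO m \<mu> \<inter> cond_event m \<mu> q))"
    using forced_event_subset[OF mu mq p_def] prob_program(2) by (intro card_mono) auto
  then have "real (card (forced_event m \<mu> p)) / card (sample_space m \<inter> cond_event m \<mu> q)
      \<le> card (sample_space m \<inter> (F_event TSO m \<mu> \<inter> cond_event m \<mu> q)) / card (sample_space m \<inter> cond_event m \<mu> q)"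
    by (intro divide_right_mono) auto
  moreover have "real (card (forced_event m \<mu> p)) / card (sample_space m \<inter> cond_event m \<mu> q)
      = word_weight q (\<mu> - 1) / ((\<mu> + q - 1) choose q)"
    unfolding card_forced_event[OF mu mq p_def] cond
    using prefix_types_nonempty[OF p] mu by (simp add: field_simps)
  ultimately show ?thesis by simp
qed

theorem claim2:
  fixes m \<mu> q :: nat
  assumes "1 \<le> m" and "1 \<le> \<mu>"
    and "measure_pmf.prob (program_pmf m) (cond_event m \<mu> q) > 0"
  shows "measure_pmf.prob (program_pmf m) (F_event TSO m \<mu> \<inter> cond_event m \<mu> q)
           / measure_pmf.prob (program_pmf m) (cond_event m \<mu> q)
         \<ge> (2 powr (1 - real q) - 2 powr (- real (\<mu> * q))) / real ((\<mu> + q - 1) choose q)"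
proof -
  have "cond_event m \<mu> q \<noteq> {}" using assms(3) by auto
  then obtain ty c where "(ty, c) \<in> cond_event m \<mu> q" by auto
  then have mq: "\<mu> + q \<le> m" by (rule cond_event_size)
  have "(2 powr (1 - real q) - 2 powr (- real (\<mu> * q))) / real ((\<mu> + q - 1) choose q)
      \<le> word_weight q (\<mu> - 1) / ((\<mu> + q - 1) choose q)"
    using word_weight_lower_bound_powr[of q "\<mu> - 1"] assms(2) by (intro divide_right_mono) auto
  also have "\<dots> \<le> card (sample_space m \<inter> (F_event TSO m \<mu> \<inter> cond_event m \<mu> q))
                  / card (sample_space m \<inter> cond_event m \<mu> q)"
    by (rule conditional_frequency_bound[OF assms(2) mq])
  also have "\<dots> = measure_pmf.prob (program_pmf m) (F_event TSO m \<mu> \<inter> cond_event m \<mu> q)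
                  / measure_pmf.prob (program_pmf m) (cond_event m \<mu> q)"
    unfolding prob_program(1) using prob_program(3)[of m] by (simp add: field_simps)
  finally show ?thesis .
qed

end
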